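(* Let $G$ be an internally 3-connected graph containing two nontrivial fans $F_1,F_2$ (fans of $G$). If $F_1$ and $F_2$ have a common interior vertex, then they have the same center.
   Context: Graphs are finite and simple. A graph is internally 3-connected if it is obtained from a 3-connected graph by subdividing each edge at most once. Type-I graphs: let $H$ have a specified Hamiltonian cycle $C$; edges not in $C$ are chords; non-incident chords $ab,cd$ cross if $a,c,b,d$ occur in this cyclic order on $C$. $H$ is type-I if every chord crosses at most one other chord and, whenever chords $ab,cd$ cross, either both $ac,bd\in E(C)$ or both $ad,bc\in E(C)$. A fan: a type-I graph $H$ with reference cycle $C$ and two edges $ab,ad$ of $C$ sharing the end $a$ such that every chord joins $a$ to the path $C\setminus a$; its corners are $a,b,d$, its center is $a$, its length is its number of chords; it is nontrivial if its length is at least $2$. A fan of $G$: $J\subseteq G$ is a fan of $G$ if $G$ is obtained from a graph $H'$ by adding the fan $J$, i.e. identifying the corners of $J$ with distinct vertices of $H'$, where $J,H'$ are regarded as subgraphs of $G$ with $V(J\cap H')$ equal to the set $Z$ of corners of $J$ (so every edge of $G$ incident with a vertex of $J\setminus Z$ lies in $J$). Vertices of $J\setminus Z$ are interior vertices of $J$. *)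

theory Defs
  imports Main
begin

definition simple_graph :: "'a set \<Rightarrow> 'a set set \<Rightarrow> bool" where
  "simple_graph V E \<longleftrightarrow> finite V \<and>
     (\<forall>e\<in>E. \<exists>u v. e = {u, v} \<and> u \<noteq> v \<and> u \<in> V \<and> v \<in> V)"

definition connected_graph :: "'a set \<Rightarrow> 'a set set \<Rightarrow> bool" where
  "connected_graph V E \<longleftrightarrow>
     (\<forall>u\<in>V. \<forall>v\<in>V. (u, v) \<in> {(x, y). {x, y} \<in> E \<and> x \<in> V \<and> y \<in> V}\<^sup>*)"

definition three_connected :: "'a set \<Rightarrow> 'a set set \<Rightarrow> bool" where
  "three_connected V E \<longleftrightarrow> simple_graph V E \<and> card V \<ge> 4 \<and>
     (\<forall>S. S \<subseteq> V \<and> card S \<le> 2 \<longrightarrow> connected_graph (V - S) {e \<in> E. e \<inter> S = {}})"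

text \<open>Internally 3-connected: obtained from a 3-connected graph (W,F) by subdividing each
  edge at most once; the subdivision vertex x \<in> V - W subdivides the edge \<sigma> x.\<close>
definition internally_3_connected :: "'a set \<Rightarrow> 'a set set \<Rightarrow> bool" where
  "internally_3_connected V E \<longleftrightarrow> simple_graph V E \<and>
     (\<exists>W F \<sigma>. W \<subseteq> V \<and> three_connected W F \<and> (\<forall>x\<in>V - W. \<sigma> x \<in> F) \<and>
        inj_on \<sigma> (V - W) \<and>
        E = (F - \<sigma> ` (V - W)) \<union> {{x, y} | x y. x \<in> V - W \<and> y \<in> \<sigma> x})"

text \<open>A cycle is given as a list of distinct vertices in cyclic order.\<close>
definition cyc_edges :: "'a list \<Rightarrow> 'a set set" where
  "cyc_edges cyc = {{cyc ! i, cyc ! (Suc i mod length cyc)} | i. i < length cyc}"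

definition hamiltonian_cycle :: "'a set \<Rightarrow> 'a set set \<Rightarrow> 'a list \<Rightarrow> bool" where
  "hamiltonian_cycle V E cyc \<longleftrightarrow> distinct cyc \<and> set cyc = V \<and> length cyc \<ge> 3 \<and>
     cyc_edges cyc \<subseteq> E"

definition chords :: "'a set set \<Rightarrow> 'a list \<Rightarrow> 'a set set" where
  "chords E cyc = E - cyc_edges cyc"

definition cyclic4 :: "nat \<Rightarrow> nat \<Rightarrow> nat \<Rightarrow> nat \<Rightarrow> bool" where
  "cyclic4 i j k l \<longleftrightarrow> (i < j \<and> j < k \<and> k < l) \<or> (j < k \<and> k < l \<and> l < i) \<or>
                      (k < l \<and> l < i \<and> i < j) \<or> (l < i \<and> i < j \<and> j < k)"

definition in_cyclic_order :: "'a list \<Rightarrow> 'a \<Rightarrow> 'a \<Rightarrow> 'a \<Rightarrow> 'a \<Rightarrow> bool" where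
  "in_cyclic_order cyc a c b d \<longleftrightarrow>
     (\<exists>i j k l. i < length cyc \<and> j < length cyc \<and> k < length cyc \<and> l < length cyc \<and>
        cyc ! i = a \<and> cyc ! j = c \<and> cyc ! k = b \<and> cyc ! l = d \<and> cyclic4 i j k l)"

definition crosses :: "'a list \<Rightarrow> 'a set \<Rightarrow> 'a set \<Rightarrow> bool" where
  "crosses cyc e f \<longleftrightarrow> e \<inter> f = {} \<and>
     (\<exists>a b c d. e = {a, b} \<and> f = {c, d} \<and> in_cyclic_order cyc a c b d)"

definition type_I :: "'a set \<Rightarrow> 'a set set \<Rightarrow> 'a list \<Rightarrow> bool" where
  "type_I V E cyc \<longleftrightarrow> simple_graph V E \<and> hamiltonian_cycle V E cyc \<and>
     (\<forall>e\<in>chords E cyc. card {f \<in> chords E cyc. crosses cyc e f} \<le> 1) \<and>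
     (\<forall>a b c d. {a, b} \<in> chords E cyc \<and> {c, d} \<in> chords E cyc \<and> {a, b} \<inter> {c, d} = {} \<and>
        in_cyclic_order cyc a c b d \<longrightarrow>
        ({a, c} \<in> cyc_edges cyc \<and> {b, d} \<in> cyc_edges cyc) \<or>
        ({a, d} \<in> cyc_edges cyc \<and> {b, c} \<in> cyc_edges cyc))"

text \<open>A fan (V,E) with reference cycle cyc, center a and corners a, b, d.\<close>
definition is_fan :: "'a set \<Rightarrow> 'a set set \<Rightarrow> 'a list \<Rightarrow> 'a \<Rightarrow> 'a \<Rightarrow> 'a \<Rightarrow> bool" where
  "is_fan V E cyc a b d \<longleftrightarrow> type_I V E cyc \<and> b \<noteq> d \<and>
     {a, b} \<in> cyc_edges cyc \<and> {a, d} \<in> cyc_edges cyc \<and>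
     (\<forall>e\<in>chords E cyc. a \<in> e)"

definition fan_length :: "'a set set \<Rightarrow> 'a list \<Rightarrow> nat" where
  "fan_length E cyc = card (chords E cyc)"

text \<open>(VJ,EJ) is a fan of G = (V,E): G is obtained from a graph H' = (VH,EH) by adding the fan,
  with V(J \<inter> H') equal to the set of corners.\<close>
definition fan_of :: "'a set \<Rightarrow> 'a set set \<Rightarrow> 'a set \<Rightarrow> 'a set set \<Rightarrow> 'a list \<Rightarrow> 'a \<Rightarrow> 'a \<Rightarrow> 'a \<Rightarrow> bool" where
  "fan_of V E VJ EJ cyc a b d \<longleftrightarrow> is_fan VJ EJ cyc a b d \<and>
     (\<exists>VH EH. simple_graph VH EH \<and> VH \<union> VJ = V \<and> EH \<union> EJ = E \<and> VH \<inter> VJ = {a, b, d})"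

end

theory Submission
  imports Defs
begin

text \<open>Interior vertices of a fan have degree 2 or 3 in \<open>G\<close>, the latter exactly at the ends of chords,
  while the center of a nontrivial fan has degree at least 4; and in an internally 3-connected
  graph no two vertices of degree at most 2 are adjacent.
  Suppose the centers \<open>a1 \<noteq> a2\<close> share an interior vertex. A common interior vertex adjacent to
  \<open>a1\<close> is adjacent to \<open>a2\<close> too, which makes \<open>a2\<close> a corner of the first fan next to it on the
  reference cycle; so there is at most one such vertex, and following the cycle from it one reaches
  the other corner after one more interior vertex, leaving the fan with a single chord. A common
  interior vertex of degree 2 has two neighbours of degree at least 3; these are common interior
  vertices of neither fan, so one is interior to the first fan and a corner of the second, and
  again the first fan would have a single chord.\<close>

definition neighbors :: "'a set set \<Rightarrow> 'a \<Rightarrow> 'a set" where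
  "neighbors E v = {u. {u, v} \<in> E}"

abbreviation degree :: "'a set set \<Rightarrow> 'a \<Rightarrow> nat" where
  "degree E v \<equiv> card (neighbors E v)"

abbreviation cycle_neighbors :: "'a list \<Rightarrow> 'a \<Rightarrow> 'a set" where
  "cycle_neighbors cyc \<equiv> neighbors (cyc_edges cyc)"

lemma neighbors_sym: "u \<in> neighbors E v \<longleftrightarrow> v \<in> neighbors E u"
  unfolding neighbors_def by (simp add: insert_commute)

lemma neighbors_mono: "E \<subseteq> E' \<Longrightarrow> neighbors E v \<subseteq> neighbors E' v"
  unfolding neighbors_def by auto

lemma card_2_eq_doubleton:
  assumes "card A = 2" and "p \<in> A" and "q \<in> A" and "p \<noteq> q"
  shows "A = {p, q}"
proof -
  have "finite A"
    using assms(1) by (simp add: card_ge_0_finite)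
  then have "{p, q} = A"
    using assms by (intro card_subset_eq) auto
  then show ?thesis ..
qed

lemma card_2_other: "card A = 2 \<Longrightarrow> p \<in> A \<Longrightarrow> \<exists>q. q \<noteq> p \<and> A = {p, q}"
  by (auto simp: card_2_iff doubleton_eq_iff)

lemma simple_graph_edge_subset:
  assumes "simple_graph V E" and "e \<in> E"
  shows "e \<subseteq> V"
proof -
  obtain u v where "e = {u, v}" "u \<in> V" "v \<in> V"
    using assms unfolding simple_graph_def by meson
  then show ?thesis by simp
qed

lemma simple_graph_neighbors_subset: "simple_graph V E \<Longrightarrow> neighbors E v \<subseteq> V"
  unfolding neighbors_def using simple_graph_edge_subset by blast

lemma simple_graph_finite_neighbors:
  assumes "simple_graph V E"
  shows "finite (neighbors E v)"
proof (rule finite_subset)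
  show "neighbors E v \<subseteq> V"
    using assms by (rule simple_graph_neighbors_subset)
  show "finite V"
    using assms unfolding simple_graph_def by simp
qed

lemma simple_graph_not_self_neighbor:
  assumes "simple_graph V E"
  shows "v \<notin> neighbors E v"
proof
  assume "v \<in> neighbors E v"
  then have "{v} \<in> E"
    unfolding neighbors_def by simp
  then obtain x y where "{v} = {x, y}" "x \<noteq> y"
    using assms unfolding simple_graph_def by blast
  then show False
    by (metis insertI1 insert_commute singletonD)
qed

lemma cycle_neighbors_nth:
  assumes i: "i < length cyc" and distinct: "distinct cyc"
  shows "cycle_neighbors cyc (cyc ! i) =
    {cyc ! (Suc i mod length cyc), cyc ! ((i + length cyc - 1) mod length cyc)}"
    (is "_ = {cyc ! ?succ, cyc ! ?pred}")
proof -
  let ?n = "length cyc"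
  have pos: "0 < ?n" using i by linarith
  have same: "cyc ! j = cyc ! k \<longleftrightarrow> j = k" if "j < ?n" "k < ?n" for j k
    using distinct that by (simp add: nth_eq_iff_index_eq)
  have edge: "{cyc ! j, cyc ! (Suc j mod ?n)} \<in> cyc_edges cyc" if "j < ?n" for j
    using that unfolding cyc_edges_def by blast
  have succ_pred: "Suc ?pred mod ?n = i"
    using i by (cases i) (auto simp: mod_Suc_eq)
  show ?thesis
  proof (intro set_eqI iffI)
    fix u assume "u \<in> cycle_neighbors cyc (cyc ! i)"
    then obtain j where j: "j < ?n" and "{u, cyc ! i} = {cyc ! j, cyc ! (Suc j mod ?n)}"
      unfolding neighbors_def cyc_edges_def by blast
    then consider "u = cyc ! j" "cyc ! i = cyc ! (Suc j mod ?n)" | "u = cyc ! (Suc j mod ?n)" "cyc ! i = cyc ! j"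
      by (auto simp: doubleton_eq_iff)
    then show "u \<in> {cyc ! ?succ, cyc ! ?pred}"
    proof cases
      case 1
      then have "i = Suc j mod ?n"
        using same[OF i, of "Suc j mod ?n"] pos by simp
      then have "j = ?pred"
        using j by (cases "Suc j = ?n") auto
      then show ?thesis using 1 by simp
    next
      case 2
      then show ?thesis using same[OF i j] by simp
    qed
  next
    fix u assume "u \<in> {cyc ! ?succ, cyc ! ?pred}"
    moreover have "?pred < ?n" using pos by simp
    ultimately show "u \<in> cycle_neighbors cyc (cyc ! i)"
      using edge[OF i] edge[of ?pred] succ_pred unfolding neighbors_def by (auto simp: insert_commute)
  qed
qed

lemma card_cycle_neighbors:
  assumes "distinct cyc" and "3 \<le> length cyc" and "v \<in> set cyc"
  shows "card (cycle_neighbors cyc v) = 2"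
proof -
  obtain i where i: "i < length cyc" "v = cyc ! i"
    using assms(3) by (metis in_set_conv_nth)
  have "0 < length cyc" using i(1) by linarith
  moreover have "Suc i mod length cyc \<noteq> (i + length cyc - 1) mod length cyc"
    using i assms(2) by (cases "Suc i = length cyc"; cases i) auto
  ultimately have "cyc ! (Suc i mod length cyc) \<noteq> cyc ! ((i + length cyc - 1) mod length cyc)"
    using assms(1) by (simp add: nth_eq_iff_index_eq)
  then show ?thesis
    using cycle_neighbors_nth[OF i(1) assms(1)] i(2) by simp
qed

lemma cycle_subset_if_closed:
  assumes "v \<in> S" and "v \<in> set cyc" and closed: "\<forall>u\<in>S. cycle_neighbors cyc u \<subseteq> S"
  shows "set cyc \<subseteq> S"
proof
  let ?n = "length cyc"
  obtain i where i: "i < ?n" "cyc ! i = v"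
    using assms(2) by (metis in_set_conv_nth)
  have reach: "cyc ! ((i + m) mod ?n) \<in> S" for m
  proof (induction m)
    case 0
    then show ?case using i assms(1) by simp
  next
    case (Suc m)
    let ?j = "(i + m) mod ?n"
    have "?j < ?n" using i by (metis mod_less_divisor not_less0 gr0I)
    then have "cyc ! (Suc ?j mod ?n) \<in> cycle_neighbors cyc (cyc ! ?j)"
      unfolding neighbors_def cyc_edges_def by (auto simp: insert_commute)
    moreover have "Suc ?j mod ?n = (i + Suc m) mod ?n"
      by (simp add: mod_Suc_eq)
    ultimately show ?case
      using closed Suc.IH by auto
  qed
  fix u assume "u \<in> set cyc"
  then obtain k where k: "k < ?n" "u = cyc ! k"
    by (metis in_set_conv_nth)
  then have "(i + (k + ?n - i)) mod ?n = k" using i by simp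
  then show "u \<in> S" using reach[of "k + ?n - i"] k by simp
qed

lemma three_connected_degree_ge_3:
  assumes "three_connected W F" and "v \<in> W"
  shows "3 \<le> degree F v"
proof (rule ccontr)
  let ?S = "neighbors F v"
  assume "\<not> 3 \<le> degree F v"
  then have small: "card ?S \<le> 2" by simp
  have simple: "simple_graph W F" and "card W \<ge> 4"
    and cut: "\<And>S. S \<subseteq> W \<Longrightarrow> card S \<le> 2 \<Longrightarrow> connected_graph (W - S) {e \<in> F. e \<inter> S = {}}"
    using assms(1) unfolding three_connected_def by auto
  have SW: "?S \<subseteq> W"
    using simple by (rule simple_graph_neighbors_subset)
  have v: "v \<notin> ?S"
    using simple by (rule simple_graph_not_self_neighbor)
  have fin: "finite ?S"
    using simple by (rule simple_graph_finite_neighbors)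
  have "\<not> W \<subseteq> insert v ?S"
  proof
    assume "W \<subseteq> insert v ?S"
    then have "card W \<le> card (insert v ?S)"
      using fin by (intro card_mono) auto
    also have "\<dots> \<le> 3"
      using fin small by (simp add: card_insert_if)
    finally show False
      using \<open>card W \<ge> 4\<close> by simp
  qed
  then obtain u where u: "u \<in> W" "u \<noteq> v" "u \<notin> ?S" by auto
  have "(v, u) \<in> {(x, y). {x, y} \<in> {e \<in> F. e \<inter> ?S = {}} \<and> x \<in> W - ?S \<and> y \<in> W - ?S}\<^sup>*"
    using cut[OF SW small] u assms(2) v unfolding connected_graph_def by auto
  then show False
  proof (cases rule: converse_rtranclE)
    case base
    then show False using u by simp
  next
    case (step y)
    then show False unfolding neighbors_def by (auto simp: insert_commute)
  qed
qed

text \<open>Replacing an edge \<open>{z, u}\<close> by a path through its subdivision vertex only renames the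
  neighbour \<open>u\<close> of \<open>z\<close>, so branch vertices keep their degree.\<close>
lemma subdivision_degree_ge:
  assumes finite: "finite (neighbors E z)" and edges: "\<forall>e\<in>F. e \<subseteq> W" and z: "z \<in> W"
    and E: "E = (F - \<sigma> ` (V - W)) \<union> {{x, y} | x y. x \<in> V - W \<and> y \<in> \<sigma> x}"
  shows "degree F z \<le> degree E z"
proof -
  define sub where "sub u = inv_into (V - W) \<sigma> {z, u}" for u
  define f where "f u = (if {z, u} \<in> \<sigma> ` (V - W) then sub u else u)" for u
  have sub: "sub u \<in> V - W" "\<sigma> (sub u) = {z, u}" if "{z, u} \<in> \<sigma> ` (V - W)" for u
    using inv_into_into[OF that] f_inv_into_f[OF that] unfolding sub_def by auto
  have NF: "neighbors F z \<subseteq> W"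
    using edges unfolding neighbors_def by blast
  have "inj_on f (neighbors F z)"
  proof (rule inj_onI)
    fix u1 u2 assume u: "u1 \<in> neighbors F z" "u2 \<in> neighbors F z" and "f u1 = f u2"
    then show "u1 = u2"
      using sub[of u1] sub[of u2] NF unfolding f_def
      by (auto split: if_splits simp: doubleton_eq_iff)
  qed
  moreover have "f ` neighbors F z \<subseteq> neighbors E z"
  proof
    fix w assume "w \<in> f ` neighbors F z"
    then obtain u where u: "u \<in> neighbors F z" "w = f u" by auto
    show "w \<in> neighbors E z"
    proof (cases "{z, u} \<in> \<sigma> ` (V - W)")
      case True
      then have "w \<in> V - W" "z \<in> \<sigma> w" using sub u(2) unfolding f_def by auto
      then show ?thesis unfolding neighbors_def E by blast
    next
      case False
      then show ?thesis using u unfolding f_def neighbors_def E by (auto simp: insert_commute)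
    qed
  qed
  ultimately show ?thesis
    using card_inj_on_le[OF _ _ finite] by blast
qed

lemma internally_3_connected_low_degree_not_adjacent:
  assumes G: "internally_3_connected V E" and "{u, v} \<in> E"
    and "degree E u \<le> 2" and "degree E v \<le> 2"
  shows False
proof -
  obtain W F \<sigma> where "three_connected W F" and \<sigma>: "\<forall>x\<in>V - W. \<sigma> x \<in> F"
    and E: "E = (F - \<sigma> ` (V - W)) \<union> {{x, y} | x y. x \<in> V - W \<and> y \<in> \<sigma> x}"
    using G unfolding internally_3_connected_def by blast
  have "simple_graph W F"
    using \<open>three_connected W F\<close> unfolding three_connected_def by simp
  then have edges: "\<forall>e\<in>F. e \<subseteq> W"
    using simple_graph_edge_subset by blast
  have branch: "3 \<le> degree E z" if "z \<in> W" for z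
    using subdivision_degree_ge[OF _ edges that E] three_connected_degree_ge_3[OF \<open>three_connected W F\<close> that]
      simple_graph_finite_neighbors G unfolding internally_3_connected_def by fastforce
  have "u \<in> W \<or> v \<in> W"
    using \<open>{u, v} \<in> E\<close> edges \<sigma> unfolding E by (auto simp: doubleton_eq_iff)
  then show False
    using branch assms(3,4) by fastforce
qed

locale fan_in_graph =
  fixes V :: "'a set" and E :: "'a set set" and VJ :: "'a set" and EJ :: "'a set set"
    and cyc :: "'a list" and a b d :: 'a
  assumes internally_3_connected: "internally_3_connected V E"
    and fan_of: "fan_of V E VJ EJ cyc a b d"
    and nontrivial: "2 \<le> fan_length EJ cyc"
begin

abbreviation interior :: "'a set" where
  "interior \<equiv> VJ - {a, b, d}"

lemma graph_simple: "simple_graph V E"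
  using internally_3_connected unfolding internally_3_connected_def by simp

lemma is_fan: "is_fan VJ EJ cyc a b d"
  using fan_of unfolding fan_of_def by simp

lemma fan_simple: "simple_graph VJ EJ"
  and distinct_cyc: "distinct cyc" and set_cyc: "set cyc = VJ" and length_cyc: "3 \<le> length cyc"
  and cyc_edges_fan: "cyc_edges cyc \<subseteq> EJ"
  using is_fan unfolding is_fan_def type_I_def hamiltonian_cycle_def by auto

lemma corners: "b \<noteq> d" "{a, b} \<in> cyc_edges cyc" "{a, d} \<in> cyc_edges cyc"
  and chords_at_center: "e \<in> chords EJ cyc \<Longrightarrow> a \<in> e"
  using is_fan unfolding is_fan_def by auto

lemma attachment: "\<exists>VH EH. simple_graph VH EH \<and> VH \<union> VJ = V \<and> EH \<union> EJ = E \<and> VH \<inter> VJ = {a, b, d}"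
  using fan_of unfolding fan_of_def by simp

lemma fan_edges: "EJ \<subseteq> E"
  using attachment by blast

lemma cycle_neighbors_subset_neighbors: "cycle_neighbors cyc v \<subseteq> neighbors E v"
  using cyc_edges_fan fan_edges by (intro neighbors_mono) (rule order_trans)

lemma cycle_neighbors_subset: "cycle_neighbors cyc v \<subseteq> VJ"
  using neighbors_mono[OF cyc_edges_fan] simple_graph_neighbors_subset[OF fan_simple] by (rule order_trans)

lemma cycle_neighbor_in_fan: "u \<in> cycle_neighbors cyc v \<Longrightarrow> u \<in> VJ"
  using cycle_neighbors_subset by blast

lemma card_cycle_neighbors_fan: "v \<in> VJ \<Longrightarrow> card (cycle_neighbors cyc v) = 2"
  using card_cycle_neighbors[OF distinct_cyc length_cyc] set_cyc by simp

lemma cycle_neighbors_eq: "v \<in> VJ \<Longrightarrow> p \<in> cycle_neighbors cyc v \<Longrightarrow> q \<in> cycle_neighbors cyc v \<Longrightarrow> p \<noteq> q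
    \<Longrightarrow> cycle_neighbors cyc v = {p, q}"
  by (rule card_2_eq_doubleton[OF card_cycle_neighbors_fan])

lemma not_self_cycle_neighbor: "v \<notin> cycle_neighbors cyc v"
  using simple_graph_not_self_neighbor[OF fan_simple] neighbors_mono[OF cyc_edges_fan] by blast

lemma corners_cycle_neighbors: "b \<in> cycle_neighbors cyc a" "d \<in> cycle_neighbors cyc a"
  using corners unfolding neighbors_def by (auto simp: insert_commute)

lemma center_in_fan: "a \<in> VJ" and corners_in_fan: "b \<in> VJ" "d \<in> VJ"
  using corners_cycle_neighbors neighbors_sym cycle_neighbors_subset by fast+

lemma cycle_neighbors_center: "cycle_neighbors cyc a = {b, d}"
  using cycle_neighbors_eq[OF center_in_fan corners_cycle_neighbors corners(1)] .

lemma center_not_cycle_neighbor: "y \<in> interior \<Longrightarrow> a \<notin> cycle_neighbors cyc y"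
  using cycle_neighbors_center neighbors_sym by fastforce

text \<open>Every edge at an interior vertex belongs to the fan, and is a cycle edge or a chord.\<close>
lemma neighbors_interior:
  assumes y: "y \<in> interior"
  shows "neighbors E y = (if {a, y} \<in> E then insert a (cycle_neighbors cyc y) else cycle_neighbors cyc y)"
proof -
  obtain VH EH where H: "simple_graph VH EH" "EH \<union> EJ = E" "VH \<inter> VJ = {a, b, d}"
    using attachment by blast
  have "{u, y} \<in> EJ" if "{u, y} \<in> E" for u
    using that H y simple_graph_edge_subset[OF H(1), of "{u, y}"] by auto
  then have "neighbors E y \<subseteq> insert a (cycle_neighbors cyc y)"
    using chords_at_center y unfolding neighbors_def chords_def by auto
  then show ?thesis
    using cycle_neighbors_subset_neighbors unfolding neighbors_def by auto
qed

lemma degree_interior: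
  assumes "y \<in> interior"
  shows "degree E y = (if {a, y} \<in> E then 3 else 2)"
proof -
  have "finite (cycle_neighbors cyc y)" "card (cycle_neighbors cyc y) = 2"
    using assms card_cycle_neighbors_fan by (auto intro: card_ge_0_finite)
  then show ?thesis
    using neighbors_interior[OF assms] center_not_cycle_neighbor[OF assms] by simp
qed

lemma interior_high_degree_adjacent_center: "y \<in> interior \<Longrightarrow> 3 \<le> degree E y \<Longrightarrow> {a, y} \<in> E"
  using degree_interior by fastforce

lemma chord_end_other_than: "\<exists>t\<in>interior. {a, t} \<in> E \<and> t \<noteq> y"
proof (rule ccontr)
  assume no_other: "\<not> ?thesis"
  have "e = {a, y}" if e: "e \<in> chords EJ cyc" for e
  proof -
    have "e \<in> EJ" "e \<notin> cyc_edges cyc" "a \<in> e"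
      using e chords_at_center unfolding chords_def by auto
    moreover obtain p q where "e = {p, q}" "p \<noteq> q" "p \<in> VJ" "q \<in> VJ"
      using fan_simple \<open>e \<in> EJ\<close> unfolding simple_graph_def by blast
    ultimately obtain t where t: "e = {a, t}" "t \<in> VJ" "t \<noteq> a"
      by auto
    with \<open>e \<notin> cyc_edges cyc\<close> corners have "t \<in> interior"
      by auto
    then show ?thesis
      using no_other t \<open>e \<in> EJ\<close> fan_edges by auto
  qed
  then have "card (chords EJ cyc) \<le> card {{a, y}}"
    by (intro card_mono) auto
  then show False
    using nontrivial unfolding fan_length_def by simp
qed

lemma degree_center: "4 \<le> degree E a"
proof -
  obtain t1 where t1: "t1 \<in> interior" "{a, t1} \<in> E"
    using chord_end_other_than by blast
  obtain t2 where t2: "t2 \<in> interior" "{a, t2} \<in> E" "t2 \<noteq> t1"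
    using chord_end_other_than by blast
  have "{b, d, t1, t2} \<subseteq> neighbors E a"
    using t1 t2 corners_cycle_neighbors cycle_neighbors_subset_neighbors neighbors_sym
    unfolding neighbors_def by (auto simp: insert_commute)
  moreover have "card {b, d, t1, t2} = 4"
    using t1 t2 corners by auto
  ultimately show ?thesis
    using card_mono[OF simple_graph_finite_neighbors[OF graph_simple]] by metis
qed

lemma fan_subset_if_closed: "a \<in> S \<Longrightarrow> \<forall>v\<in>S. cycle_neighbors cyc v \<subseteq> S \<Longrightarrow> VJ \<subseteq> S"
  using cycle_subset_if_closed center_in_fan set_cyc by metis

lemma cycle_neighbors_interior_neq_corners:
  assumes y: "y \<in> interior"
  shows "cycle_neighbors cyc y \<noteq> {b, d}"
proof
  assume cy: "cycle_neighbors cyc y = {b, d}"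
  have "y \<in> cycle_neighbors cyc b" "y \<in> cycle_neighbors cyc d"
    using cy by (auto simp: neighbors_sym[of y])
  moreover have "a \<in> cycle_neighbors cyc b" "a \<in> cycle_neighbors cyc d"
    using corners_cycle_neighbors by (auto simp: neighbors_sym[of a])
  ultimately have "cycle_neighbors cyc b = {a, y}" "cycle_neighbors cyc d = {a, y}"
    using cycle_neighbors_eq corners_in_fan y by auto
  then have "VJ \<subseteq> {a, b, d, y}"
    using fan_subset_if_closed[of "{a, b, d, y}"] cycle_neighbors_center cy by auto
  then show False
    using chord_end_other_than[of y] by auto
qed

text \<open>An interior path \<open>p, y, w, q\<close> joining the two corners leaves room for only two chords.\<close>
lemma no_short_interior_path:
  assumes y: "y \<in> interior" and w: "w \<in> interior"
    and cy: "cycle_neighbors cyc y = {p, w}" and cw: "cycle_neighbors cyc w = {y, q}"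
    and pq: "{p, q} = {b, d}" and missing_chord: "{a, y} \<notin> E \<or> {a, w} \<notin> E"
  shows False
proof -
  have "p \<in> VJ" "q \<in> VJ" "a \<in> cycle_neighbors cyc p" "a \<in> cycle_neighbors cyc q"
    using pq corners_in_fan corners_cycle_neighbors by (auto simp: neighbors_sym[of a] doubleton_eq_iff)
  moreover have "y \<in> cycle_neighbors cyc p" "w \<in> cycle_neighbors cyc q"
    using cy cw by (auto simp: neighbors_sym[of y] neighbors_sym[of w])
  ultimately have "cycle_neighbors cyc p = {a, y}" "cycle_neighbors cyc q = {a, w}"
    using cycle_neighbors_eq y w by auto
  moreover have "cycle_neighbors cyc a = {p, q}"
    using cycle_neighbors_center pq by simp
  ultimately have "VJ \<subseteq> {a, p, q, y, w}"
    using fan_subset_if_closed[of "{a, p, q, y, w}"] cy cw by auto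
  then have "interior \<subseteq> {y, w}"
    using pq by auto
  then show False
    using chord_end_other_than[of y] chord_end_other_than[of w] missing_chord by auto
qed

end

locale two_fans =
  F1: fan_in_graph V E V1 E1 cyc1 a1 b1 d1 + F2: fan_in_graph V E V2 E2 cyc2 a2 b2 d2
  for V :: "'a set" and E :: "'a set set"
    and V1 :: "'a set" and E1 :: "'a set set" and cyc1 :: "'a list" and a1 b1 d1 :: 'a
    and V2 :: "'a set" and E2 :: "'a set set" and cyc2 :: "'a list" and a2 b2 d2 :: 'a +
  assumes distinct_centers: "a1 \<noteq> a2"
begin

lemma swap: "two_fans V E V2 E2 cyc2 a2 b2 d2 V1 E1 cyc1 a1 b1 d1"
  using F2.fan_in_graph_axioms F1.fan_in_graph_axioms distinct_centers
  by (intro two_fans.intro two_fans_axioms.intro) auto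

lemma center_not_interior: "a2 \<notin> F1.interior"
proof
  assume "a2 \<in> F1.interior"
  then have "degree E a2 \<le> 3"
    using F1.degree_interior by simp
  then show False
    using F2.degree_center by simp
qed

lemma common_interior_adjacent_iff:
  "y \<in> F1.interior \<Longrightarrow> y \<in> F2.interior \<Longrightarrow> {a1, y} \<in> E \<longleftrightarrow> {a2, y} \<in> E"
  using F1.degree_interior[of y] F2.degree_interior[of y] by (auto split: if_splits)

lemma common_interior_adjacent_centers:
  assumes y1: "y \<in> F1.interior" and y2: "y \<in> F2.interior" and adj: "{a1, y} \<in> E"
  shows "a2 \<in> cycle_neighbors cyc1 y" and "a2 \<in> {b1, d1}"
proof -
  have "{a2, y} \<in> E"
    using common_interior_adjacent_iff y1 y2 adj by simp
  then have "a2 \<in> neighbors E y"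
    unfolding neighbors_def by (simp add: insert_commute)
  then show a2: "a2 \<in> cycle_neighbors cyc1 y"
    using F1.neighbors_interior[OF y1] adj distinct_centers by simp
  then have "a2 \<in> V1"
    by (rule F1.cycle_neighbor_in_fan)
  then show "a2 \<in> {b1, d1}"
    using center_not_interior distinct_centers by auto
qed

text \<open>Such a vertex is the interior neighbour of the corner \<open>a2\<close> on \<open>cyc1\<close>, so there is at most one.\<close>
lemma common_interior_adjacent_unique:
  assumes y1: "y \<in> F1.interior" and y2: "y \<in> F2.interior" and adj: "{a1, y} \<in> E"
    and y1': "y' \<in> F1.interior" and y2': "y' \<in> F2.interior" and adj': "{a1, y'} \<in> E"
  shows "y = y'"
proof (rule ccontr)
  assume "y \<noteq> y'"
  have corner: "a2 \<in> {b1, d1}"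
    using common_interior_adjacent_centers(2)[OF y1 y2 adj] .
  have "a1 \<in> cycle_neighbors cyc1 a2"
    using corner F1.corners_cycle_neighbors by (auto simp: neighbors_sym[of a1])
  moreover have "y \<in> cycle_neighbors cyc1 a2" "y' \<in> cycle_neighbors cyc1 a2"
    using common_interior_adjacent_centers(1) y1 y2 adj y1' y2' adj' by (auto simp: neighbors_sym[of y] neighbors_sym[of y'])
  moreover have "a2 \<in> V1"
    using corner F1.corners_in_fan by auto
  ultimately show False
    using F1.cycle_neighbors_eq[of a2 a1 y] \<open>y \<noteq> y'\<close> y1 y1' by auto
qed

lemma common_interior_adjacent_cycle_neighbors:
  assumes y1: "y \<in> F1.interior" and y2: "y \<in> F2.interior" and adj: "{a1, y} \<in> E"
  obtains w where "w \<in> F1.interior" "w \<in> F2.interior"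
    "cycle_neighbors cyc1 y = {a2, w}" "cycle_neighbors cyc2 y = {a1, w}"
proof -
  have adj2: "{a2, y} \<in> E"
    using common_interior_adjacent_iff y1 y2 adj by simp
  note a2 = common_interior_adjacent_centers[OF y1 y2 adj]
  note a1 = two_fans.common_interior_adjacent_centers[OF swap y2 y1 adj2]
  obtain w where "w \<noteq> a2" and c1: "cycle_neighbors cyc1 y = {a2, w}"
    using card_2_other[OF F1.card_cycle_neighbors_fan a2(1)] y1 by auto
  have "w \<noteq> a1"
    using c1 F1.center_not_cycle_neighbor[OF y1] by auto
  have "insert a1 (cycle_neighbors cyc1 y) = insert a2 (cycle_neighbors cyc2 y)"
    using F1.neighbors_interior[OF y1] F2.neighbors_interior[OF y2] adj adj2 by simp
  then have "w \<in> cycle_neighbors cyc2 y"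
    using c1 \<open>w \<noteq> a2\<close> by blast
  then have c2: "cycle_neighbors cyc2 y = {a1, w}"
    using F2.cycle_neighbors_eq a1(1) \<open>w \<noteq> a1\<close> y2 by auto
  have "w \<in> V1" "w \<in> V2"
    using c1 c2 F1.cycle_neighbor_in_fan[of w y] F2.cycle_neighbor_in_fan[of w y] by auto
  moreover have "{a2, w} \<noteq> {b1, d1}" "{a1, w} \<noteq> {b2, d2}"
    using F1.cycle_neighbors_interior_neq_corners[OF y1] F2.cycle_neighbors_interior_neq_corners[OF y2] c1 c2
    by auto
  ultimately have "w \<in> F1.interior" "w \<in> F2.interior"
    using a1(2) a2(2) \<open>w \<noteq> a1\<close> \<open>w \<noteq> a2\<close> by auto
  with c1 c2 show thesis
    using that by blast
qed

lemma no_common_interior_adjacent: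
  assumes y1: "y \<in> F1.interior" and y2: "y \<in> F2.interior"
  shows "{a1, y} \<notin> E"
proof
  assume adj: "{a1, y} \<in> E"
  obtain w where w1: "w \<in> F1.interior" and w2: "w \<in> F2.interior"
    and c1y: "cycle_neighbors cyc1 y = {a2, w}" and c2y: "cycle_neighbors cyc2 y = {a1, w}"
    using common_interior_adjacent_cycle_neighbors[OF y1 y2 adj] .
  have "w \<noteq> y"
    using c1y F1.not_self_cycle_neighbor by auto
  then have nw1: "{a1, w} \<notin> E"
    using common_interior_adjacent_unique[OF y1 y2 adj w1 w2] by auto
  then have nw2: "{a2, w} \<notin> E"
    using common_interior_adjacent_iff[OF w1 w2] by simp
  have Nw: "neighbors E w = cycle_neighbors cyc1 w" "neighbors E w = cycle_neighbors cyc2 w"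
    using F1.neighbors_interior[OF w1] F2.neighbors_interior[OF w2] nw1 nw2 by simp_all
  have "y \<in> cycle_neighbors cyc1 w"
    using c1y by (auto simp: neighbors_sym[of y])
  then obtain z where "z \<noteq> y" and c1w: "cycle_neighbors cyc1 w = {y, z}"
    using card_2_other[OF F1.card_cycle_neighbors_fan] w1 by blast
  then have c2w: "cycle_neighbors cyc2 w = {y, z}"
    using Nw by simp
  have "{z, w} \<in> E"
    using Nw(1) c1w unfolding neighbors_def by auto
  moreover have "degree E w \<le> 2"
    using F1.degree_interior[OF w1] nw1 by simp
  ultimately have "3 \<le> degree E z"
    using internally_3_connected_low_degree_not_adjacent[OF F1.internally_3_connected] by fastforce
  have "z \<in> V1" "z \<in> V2"
    using c1w c2w F1.cycle_neighbor_in_fan[of z w] F2.cycle_neighbor_in_fan[of z w] by auto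
  moreover have "z \<noteq> a1" "z \<noteq> a2"
    using \<open>{z, w} \<in> E\<close> nw1 nw2 by (auto simp: insert_commute)
  ultimately have z: "z \<noteq> a1" "z \<noteq> a2" "z \<in> V1" "z \<in> V2"
    by blast+
  consider "z \<in> F1.interior" "z \<in> F2.interior" | "z \<notin> F1.interior" | "z \<notin> F2.interior"
    by blast
  then show False
  proof cases
    case 1
    then have "{a1, z} \<in> E"
      using F1.interior_high_degree_adjacent_center \<open>3 \<le> degree E z\<close> by blast
    then show False
      using common_interior_adjacent_unique[OF y1 y2 adj 1] \<open>z \<noteq> y\<close> by simp
  next
    case 2
    then have "{a2, z} = {b1, d1}"
      using z common_interior_adjacent_centers(2)[OF y1 y2 adj] F1.corners(1) by auto
    then show False
      using F1.no_short_interior_path[OF y1 w1 c1y c1w] nw1 by blast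
  next
    case 3
    have "a1 \<in> {b2, d2}"
      using two_fans.common_interior_adjacent_centers(2)[OF swap y2 y1] y1 y2 adj
        common_interior_adjacent_iff by blast
    with 3 have "{a1, z} = {b2, d2}"
      using z F2.corners(1) by auto
    then show False
      using F2.no_short_interior_path[OF y2 w2 c2y c2w] nw2 by blast
  qed
qed

text \<open>The corner \<open>w\<close> of the second fan is adjacent to \<open>a2\<close>, which must then be the cycle neighbour
  of \<open>w\<close> beyond \<open>x\<close>; so \<open>u, x, w, a2\<close> is an interior path between the corners of the first fan.\<close>
lemma no_interior_neighbor_corner_of_other_fan:
  assumes x1: "x \<in> F1.interior" and nx: "{a1, x} \<notin> E" and cx: "cycle_neighbors cyc1 x = {u, w}"
    and u: "u \<in> {b1, d1}" "u \<noteq> a2" and w1: "w \<in> F1.interior" and w2: "w \<in> {b2, d2}"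
    and deg: "3 \<le> degree E w"
  shows False
proof -
  have "{a1, w} \<in> E"
    using F1.interior_high_degree_adjacent_center[OF w1 deg] .
  moreover have "a2 \<in> neighbors E w"
    using w2 F2.cycle_neighbors_center F2.cycle_neighbors_subset_neighbors
    by (auto simp: neighbors_sym[of a2])
  ultimately have a2: "a2 \<in> cycle_neighbors cyc1 w"
    using F1.neighbors_interior[OF w1] distinct_centers by simp
  then have "a2 \<in> {b1, d1}"
    using F1.cycle_neighbor_in_fan center_not_interior distinct_centers by auto
  with u F1.corners(1) have "{u, a2} = {b1, d1}"
    by auto
  moreover have "x \<in> cycle_neighbors cyc1 w" "x \<noteq> a2"
    using cx x1 center_not_interior by (auto simp: neighbors_sym[of x])
  then have "cycle_neighbors cyc1 w = {x, a2}"
    using F1.cycle_neighbors_eq w1 a2 by auto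
  ultimately show False
    using F1.no_short_interior_path[OF x1 w1 cx] nx by blast
qed

lemma common_interior_adjacent_center:
  assumes x1: "x \<in> F1.interior" and x2: "x \<in> F2.interior"
  shows "{a1, x} \<in> E"
proof (rule ccontr)
  assume nx1: "{a1, x} \<notin> E"
  then have nx2: "{a2, x} \<notin> E"
    using common_interior_adjacent_iff[OF x1 x2] by simp
  have Nx: "neighbors E x = cycle_neighbors cyc1 x" "neighbors E x = cycle_neighbors cyc2 x"
    using F1.neighbors_interior[OF x1] F2.neighbors_interior[OF x2] nx1 nx2 by simp_all
  have "card (cycle_neighbors cyc1 x) = 2"
    using F1.card_cycle_neighbors_fan x1 by simp
  then obtain u w where "u \<noteq> w" and c1x: "cycle_neighbors cyc1 x = {u, w}"
    by (meson card_2_iff)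
  have c2x: "cycle_neighbors cyc2 x = {u, w}"
    using Nx c1x by simp
  have "degree E x \<le> 2"
    using F1.degree_interior[OF x1] nx1 by simp
  have neighbor: "3 \<le> degree E v \<and> v \<noteq> a1 \<and> v \<noteq> a2 \<and> v \<in> V1 \<and> v \<in> V2 \<and> \<not> (v \<in> F1.interior \<and> v \<in> F2.interior)"
    if "v \<in> {u, w}" for v
  proof -
    have "{v, x} \<in> E"
      using that Nx(1) c1x unfolding neighbors_def by auto
    then have "3 \<le> degree E v"
      using internally_3_connected_low_degree_not_adjacent[OF F1.internally_3_connected]
        \<open>degree E x \<le> 2\<close> by fastforce
    moreover have "\<not> (v \<in> F1.interior \<and> v \<in> F2.interior)"
      using F1.interior_high_degree_adjacent_center \<open>3 \<le> degree E v\<close> no_common_interior_adjacent by blast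
    ultimately show ?thesis
      using that \<open>{v, x} \<in> E\<close> nx1 nx2 c1x c2x F1.cycle_neighbor_in_fan[of v x] F2.cycle_neighbor_in_fan[of v x]
      by (auto simp: insert_commute)
  qed
  have "{u, w} \<noteq> {b1, d1}" "{u, w} \<noteq> {b2, d2}"
    using F1.cycle_neighbors_interior_neq_corners[OF x1] F2.cycle_neighbors_interior_neq_corners[OF x2]
      c1x c2x by auto
  show False
  proof (cases "u \<in> {b1, d1}")
    case True
    then have "w \<in> F1.interior"
      using neighbor[of w] \<open>u \<noteq> w\<close> \<open>{u, w} \<noteq> {b1, d1}\<close> by auto
    then have "w \<in> {b2, d2}" "u \<noteq> a2"
      using neighbor \<open>u \<noteq> w\<close> by auto
    then show False
      using no_interior_neighbor_corner_of_other_fan[OF x1 nx1 c1x True _ \<open>w \<in> F1.interior\<close>] neighbor[of w] by auto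
  next
    case False
    then have "u \<in> F1.interior" "u \<in> {b2, d2}"
      using neighbor[of u] by auto
    then have "w \<in> {b1, d1}" "w \<noteq> a2"
      using neighbor[of w] \<open>u \<noteq> w\<close> \<open>{u, w} \<noteq> {b2, d2}\<close> by auto
    moreover have "cycle_neighbors cyc1 x = {w, u}"
      using c1x by auto
    ultimately show False
      using no_interior_neighbor_corner_of_other_fan[OF x1 nx1] \<open>u \<in> F1.interior\<close> \<open>u \<in> {b2, d2}\<close> neighbor[of u]
      by blast
  qed
qed

end

theorem mainTheorem15:
  fixes V :: "'a set" and E :: "'a set set"
    and V1 V2 :: "'a set" and E1 E2 :: "'a set set" and cyc1 cyc2 :: "'a list"
    and a1 b1 d1 a2 b2 d2 x :: 'a
  assumes "internally_3_connected V E"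
    and "fan_of V E V1 E1 cyc1 a1 b1 d1" and "fan_length E1 cyc1 \<ge> 2"
    and "fan_of V E V2 E2 cyc2 a2 b2 d2" and "fan_length E2 cyc2 \<ge> 2"
    and "x \<in> V1 - {a1, b1, d1}" and "x \<in> V2 - {a2, b2, d2}"
  shows "a1 = a2"
proof (rule ccontr)
  assume "a1 \<noteq> a2"
  with assms interpret two_fans V E V1 E1 cyc1 a1 b1 d1 V2 E2 cyc2 a2 b2 d2
    by (simp add: two_fans_def two_fans_axioms_def fan_in_graph_def)
  show False
    using common_interior_adjacent_center no_common_interior_adjacent assms(6,7) by blast
qed

end
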